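(* Let $d,p\ge1$ and, for $i=1,\dots,p$, let $\kappa_i>0$, $\alpha_i>d/2$ and $\mathcal{L}_i=(\kappa_i^2-\Delta)^{\alpha_i/2}$. For a real invertible $p\times p$ matrix $\mathbf{D}$, let $\mathbf{x}_{\mathbf{D}}$ denote a multivariate Matérn-SPDE field with dependence matrix $\mathbf{D}$, i.e. a stationary solution of $\mathbf{D}\,\mathrm{diag}(\mathcal{L}_1,\dots,\mathcal{L}_p)\mathbf{x}(\mathbf{s})=\dot{\boldsymbol{\mathcal{M}}}$. Two such fields with the same operators $\mathcal{L}_1,\dots,\mathcal{L}_p$ and dependence matrices $\mathbf{D}$ and $\hat{\mathbf{D}}$ have equal covariance functions if and only if $\mathbf{D}=\mathbf{Q}\hat{\mathbf{D}}$ for some orthogonal matrix $\mathbf{Q}$. Moreover, for every $\mathbf{D}$ it is always possible to find a triangular matrix $\hat{\mathbf{D}}$ such that the two models have the same covariance functions; in particular $\hat{\mathbf{D}}=\mathrm{chol}(\mathbf{D}^T\mathbf{D})$ is the unique upper-triangular choice with positive diagonal elements.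
   Context: $\Delta$ is the Laplacian on $\mathbb{R}^d$; $(\kappa^2-\Delta)^{\alpha/2}$ is defined via the Fourier transform, $\mathcal{F}((\kappa^2-\Delta)^{\alpha/2}\varphi)(\mathbf{k})=(\kappa^2+\|\mathbf{k}\|^2)^{\alpha/2}\mathcal{F}(\varphi)(\mathbf{k})$, and the SPDE is understood in the weak sense, with only stationary solutions considered. The driving noise $\dot{\boldsymbol{\mathcal{M}}}=(\dot{\mathcal{M}}_1,\dots,\dot{\mathcal{M}}_p)^T$ consists of mutually uncorrelated $L_2$-valued independently scattered random measures with unit variance, $\mathrm{Cov}(\mathcal{M}_i(A),\mathcal{M}_j(B))=\delta_{ij}|A\cap B|$ (the same noise law is used for both fields). For a symmetric positive definite matrix $\mathbf{A}$, $\mathrm{chol}(\mathbf{A})$ denotes the upper-triangular matrix $\mathbf{U}$ with positive diagonal satisfying $\mathbf{U}^T\mathbf{U}=\mathbf{A}$. *)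

theory Defs
  imports "HOL-Analysis.Analysis"
begin

definition matern_pair_density ::
  "('p \<Rightarrow> real) \<Rightarrow> ('p \<Rightarrow> real) \<Rightarrow> 'p \<Rightarrow> 'p \<Rightarrow> real^'d \<Rightarrow> real" where
  "matern_pair_density \<kappa> \<alpha> i j k =
     (\<kappa> i ^ 2 + (norm k)^2) powr (- \<alpha> i / 2) * (\<kappa> j ^ 2 + (norm k)^2) powr (- \<alpha> j / 2)"

text \<open>Cross-covariance between G_i * W and G_j * W for a single unit white noise W, where
  G_i is the Green function of L_i = (kappa_i^2 - Delta)^(alpha_i/2):
  (2 pi)^(-d) times the integral of exp(i k.h) times the pair density over R^d
  (the density is even in k, so only the cosine part survives).\<close>
definition matern_pair_cov ::
  "('p \<Rightarrow> real) \<Rightarrow> ('p \<Rightarrow> real) \<Rightarrow> 'p \<Rightarrow> 'p \<Rightarrow> real^'d \<Rightarrow> real" where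
  "matern_pair_cov \<kappa> \<alpha> i j h =
     (1 / (2 * pi) ^ CARD('d)) *
     (LINT k|lborel. cos (k \<bullet> h) * matern_pair_density \<kappa> \<alpha> i j k)"

text \<open>Matrix covariance function C(h) = E[x(s+h) x(s)^T] of the stationary solution
  x = diag(L_1,...,L_p)^(-1) D^(-1) M of  D diag(L_1,...,L_p) x = M, where M has p mutually
  uncorrelated unit-variance white-noise components:
  C(h)_{ij} = (sum_l (D^-1)_{il} (D^-1)_{jl}) * matern_pair_cov i j h.\<close>
definition matern_spde_cov ::
  "('p::finite \<Rightarrow> real) \<Rightarrow> ('p \<Rightarrow> real) \<Rightarrow> real^'p^'p \<Rightarrow> real^'d \<Rightarrow> real^'p^'p" where
  "matern_spde_cov \<kappa> \<alpha> D h =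
     (\<chi> i j. (matrix_inv D ** transpose (matrix_inv D)) $ i $ j * matern_pair_cov \<kappa> \<alpha> i j h)"

definition upper_triangular :: "real^('p::{finite,linorder})^('p::{finite,linorder}) \<Rightarrow> bool" where
  "upper_triangular U \<longleftrightarrow> (\<forall>i j. j < i \<longrightarrow> U $ i $ j = 0)"

definition lower_triangular :: "real^('p::{finite,linorder})^('p::{finite,linorder}) \<Rightarrow> bool" where
  "lower_triangular U \<longleftrightarrow> (\<forall>i j. i < j \<longrightarrow> U $ i $ j = 0)"

definition chol :: "real^('p::{finite,linorder})^('p::{finite,linorder}) \<Rightarrow> real^('p::{finite,linorder})^('p::{finite,linorder})" where
  "chol A = (THE U. upper_triangular U \<and> (\<forall>i. U $ i $ i > 0) \<and> transpose U ** U = A)"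

end

theory Submission
  imports Defs
begin

(* The covariance of the model with dependence matrix D is the entrywise product of
   D^-1 D^-T = (D^T D)^-1 with the scalar cross-covariances c_ij(h) of the operators, and
   c_ij(0) > 0 because the spectral density is positive and, for alpha_i > d/2, integrable.
   So two models have the same covariance iff D^T D = Dh^T Dh, i.e. iff D Dh^-1 is orthogonal.
   Gram-Schmidt on the columns of D gives D = Q R with R upper triangular with positive
   diagonal; then R^T R = D^T D, and such a Cholesky factor is unique (solve row by row),
   so R = chol (D^T D). *)

lemma norm_sq_plus_ge_dyadic:
  fixes k :: "'a::real_normed_vector" and m :: real
  obtains n :: nat where "norm k \<le> 2 ^ n" and "min (m\<^sup>2) (1/4) * 4 ^ n \<le> m\<^sup>2 + (norm k)\<^sup>2"
proof -
  obtain N :: nat where "norm k < 2 ^ N"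
    using real_arch_pow[of 2 "norm k"] by auto
  then have ex: "\<exists>n::nat. norm k \<le> 2 ^ n" by (auto intro: less_imp_le)
  define n where "n = (LEAST n::nat. norm k \<le> 2 ^ n)"
  have bound: "norm k \<le> 2 ^ n"
    unfolding n_def using ex by (rule LeastI_ex)
  have "min (m\<^sup>2) (1/4) * 4 ^ n \<le> m\<^sup>2 + (norm k)\<^sup>2"
  proof (cases n)
    case 0
    then show ?thesis by (simp add: min_le_iff_disj)
  next
    case (Suc n')
    then have "2 ^ n' < norm k"
      using not_less_Least[of n' "\<lambda>n. norm k \<le> 2 ^ n"] unfolding n_def by auto
    then have "(2 ^ n')\<^sup>2 \<le> (norm k)\<^sup>2"
      by (intro power_mono) auto
    then have "4 ^ n' \<le> (norm k)\<^sup>2"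
      by (simp add: power_even_eq[symmetric] power_mult)
    have "min (m\<^sup>2) (1/4) * 4 ^ n \<le> 1/4 * 4 ^ n"
      by (intro mult_right_mono) auto
    also have "\<dots> = 4 ^ n'"
      using Suc by simp
    also have "\<dots> \<le> m\<^sup>2 + (norm k)\<^sup>2"
      using \<open>4 ^ n' \<le> (norm k)\<^sup>2\<close> by (simp add: add_increasing)
    finally show ?thesis .
  qed
  with bound that show ?thesis by blast
qed

lemma integrable_norm_sq_plus_powr:
  fixes m s :: real
  assumes m: "m > 0" and s: "real DIM('a) < 2 * s"
  shows "integrable lborel (\<lambda>k::'a::euclidean_space. (m\<^sup>2 + (norm k)\<^sup>2) powr -s)"
proof -
  define c where "c = min (m\<^sup>2) (1/4)"
  define C where "C = c powr -s"
  define r where "r = (4::real) powr -s"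
  define V where "V = unit_ball_vol DIM('a)"
  have "s > 0" using s DIM_positive[where 'a='a] by linarith
  have "c > 0" using m by (simp add: c_def min_def)
  then have "C > 0" "r > 0" "V > 0" by (simp_all add: C_def r_def V_def)
  \<comment> \<open>On the ball of radius \<open>2^n\<close> the integrand is at most \<open>C r^n\<close>, while the volume grows
    like \<open>2^(n DIM('a))\<close>; the resulting geometric series converges because \<open>2 s > DIM('a)\<close>.\<close>
  have dyadic_bound: "ennreal ((m\<^sup>2 + (norm k)\<^sup>2) powr -s)
      \<le> (\<Sum>n. ennreal (C * r ^ n) * indicator (cball 0 (2 ^ n)) k)" for k :: 'a
  proof -
    obtain n where n: "norm k \<le> 2 ^ n" "c * 4 ^ n \<le> m\<^sup>2 + (norm k)\<^sup>2"
      unfolding c_def by (rule norm_sq_plus_ge_dyadic)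
    have "(m\<^sup>2 + (norm k)\<^sup>2) powr -s \<le> (c * 4 ^ n) powr -s"
      using n(2) \<open>c > 0\<close> \<open>s > 0\<close> by (intro powr_mono2') auto
    also have "\<dots> = C * r ^ n"
      using \<open>c > 0\<close>
      by (simp add: C_def r_def powr_mult powr_power powr_realpow[symmetric] powr_powr mult.commute)
    finally have "ennreal ((m\<^sup>2 + (norm k)\<^sup>2) powr -s)
        \<le> ennreal (C * r ^ n) * indicator (cball 0 (2 ^ n)) k"
      using n(1) by (simp add: ennreal_leI)
    also have "\<dots> \<le> (\<Sum>n. ennreal (C * r ^ n) * indicator (cball 0 (2 ^ n)) k)"
      using ennreal_suminf_lessD not_le by blast
    finally show ?thesis .
  qed
  have ratio: "r * 2 ^ DIM('a) < 1"
  proof -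
    have "(4::real) powr s = 2 powr (2 * s)"
      using powr_powr[of 2 2 s] by simp
    then have "r * 2 ^ DIM('a) = 2 powr (real DIM('a) - 2 * s)"
      by (simp add: r_def powr_diff powr_realpow[symmetric] powr_minus divide_simps)
    also have "\<dots> < 1" using s by (intro powr_less_one) auto
    finally show ?thesis .
  qed
  have "(\<integral>\<^sup>+k. ennreal ((m\<^sup>2 + (norm (k::'a))\<^sup>2) powr -s) \<partial>lborel)
      \<le> (\<integral>\<^sup>+k. (\<Sum>n. ennreal (C * r ^ n) * indicator (cball (0::'a) (2 ^ n)) k) \<partial>lborel)"
    by (rule nn_integral_mono) (rule dyadic_bound)
  also have "\<dots> = (\<Sum>n. ennreal (C * r ^ n) * emeasure lborel (cball (0::'a) (2 ^ n)))"
    by (subst nn_integral_suminf)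
      (simp_all add: nn_integral_cmult_indicator borel_measurable_times_ennreal
        borel_measurable_indicator borel_closed)
  also have "\<dots> = (\<Sum>n. ennreal (C * V * (r * 2 ^ DIM('a)) ^ n))"
  proof (rule suminf_cong)
    fix n
    have "((2::real) ^ n) ^ DIM('a) = (2 ^ DIM('a)) ^ n"
      by (metis power_mult mult.commute)
    then have "emeasure lborel (cball (0::'a) (2 ^ n)) = ennreal (V * (2 ^ DIM('a)) ^ n)"
      by (simp add: emeasure_cball V_def)
    also have "ennreal (C * r ^ n) * \<dots> = ennreal (C * r ^ n * (V * (2 ^ DIM('a)) ^ n))"
      using \<open>C > 0\<close> \<open>r > 0\<close> \<open>V > 0\<close> by (simp add: ennreal_mult)
    finally show "ennreal (C * r ^ n) * emeasure lborel (cball (0::'a) (2 ^ n))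
        = ennreal (C * V * (r * 2 ^ DIM('a)) ^ n)"
      by (simp add: power_mult_distrib mult_ac)
  qed
  also have "\<dots> < \<infinity>"
    using ratio \<open>C > 0\<close> \<open>r > 0\<close> \<open>V > 0\<close>
    by (simp add: less_top ennreal_suminf_neq_top summable_geometric)
  finally show ?thesis
    by (intro integrableI_nonneg) auto
qed

lemma matern_pair_density_pos:
  assumes "\<kappa> i > 0" "\<kappa> j > 0"
  shows "matern_pair_density \<kappa> \<alpha> i j k > 0"
  using assms by (simp add: matern_pair_density_def add_pos_nonneg)

lemma matern_pair_density_le:
  assumes "\<kappa> i > 0" "\<kappa> j > 0" "\<alpha> i \<ge> 0" "\<alpha> j \<ge> 0"
  shows "matern_pair_density \<kappa> \<alpha> i j k
    \<le> (min (\<kappa> i) (\<kappa> j) ^ 2 + (norm k)\<^sup>2) powr - ((\<alpha> i + \<alpha> j) / 2)"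
proof -
  define t where "t = min (\<kappa> i) (\<kappa> j) ^ 2 + (norm k)\<^sup>2"
  have "t > 0" using assms(1,2) by (simp add: t_def add_pos_nonneg)
  have "min (\<kappa> i) (\<kappa> j) ^ 2 \<le> \<kappa> l ^ 2" if "l \<in> {i, j}" for l
    using that assms(1,2) by (auto intro!: power_mono)
  then have "(\<kappa> l ^ 2 + (norm k)\<^sup>2) powr (- \<alpha> l / 2) \<le> t powr (- \<alpha> l / 2)"
    if "l \<in> {i, j}" for l
    using that assms \<open>t > 0\<close> unfolding t_def by (intro powr_mono2') auto
  then have "matern_pair_density \<kappa> \<alpha> i j k \<le> t powr (- \<alpha> i / 2) * t powr (- \<alpha> j / 2)"
    unfolding matern_pair_density_def by (intro mult_mono) auto
  also have "\<dots> = t powr - ((\<alpha> i + \<alpha> j) / 2)"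
    by (simp add: powr_add[symmetric] add_divide_distrib)
  finally show ?thesis unfolding t_def .
qed

lemma integrable_matern_pair_density:
  assumes "\<kappa> i > 0" "\<kappa> j > 0"
    and "\<alpha> i > real CARD('d) / 2" "\<alpha> j > real CARD('d) / 2"
  shows "integrable lborel (matern_pair_density \<kappa> \<alpha> i j :: real^'d::finite \<Rightarrow> real)"
proof (rule Bochner_Integration.integrable_bound)
  show "integrable lborel (\<lambda>k::real^'d.
      (min (\<kappa> i) (\<kappa> j) ^ 2 + (norm k)\<^sup>2) powr - ((\<alpha> i + \<alpha> j) / 2))"
    using assms by (intro integrable_norm_sq_plus_powr) auto
  show "matern_pair_density \<kappa> \<alpha> i j \<in> borel_measurable lborel"
    unfolding matern_pair_density_def by measurable
  have "\<alpha> i \<ge> 0" "\<alpha> j \<ge> 0"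
    using assms(3,4) by (simp_all add: order_trans[OF _ less_imp_le])
  then have "norm (matern_pair_density \<kappa> \<alpha> i j k)
      \<le> norm ((min (\<kappa> i) (\<kappa> j) ^ 2 + (norm k)\<^sup>2) powr - ((\<alpha> i + \<alpha> j) / 2))" for k
    using matern_pair_density_le[of \<kappa> i j \<alpha> k] matern_pair_density_pos[of \<kappa> i j \<alpha> k]
      assms(1,2)
    by (metis abs_ge_self abs_of_pos order_trans real_norm_def)
  then show "AE k in lborel. norm (matern_pair_density \<kappa> \<alpha> i j k)
      \<le> norm ((min (\<kappa> i) (\<kappa> j) ^ 2 + (norm k)\<^sup>2) powr - ((\<alpha> i + \<alpha> j) / 2))"
    by (rule AE_I2)
qed

lemma matern_pair_cov_zero_pos:
  assumes "\<kappa> i > 0" "\<kappa> j > 0"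
    and "\<alpha> i > real CARD('d) / 2" "\<alpha> j > real CARD('d) / 2"
  shows "matern_pair_cov \<kappa> \<alpha> i j (0::real^'d::finite) > 0"
proof -
  let ?f = "matern_pair_density \<kappa> \<alpha> i j :: real^'d \<Rightarrow> real"
  have pos: "?f k > 0" for k
    using assms(1,2) by (rule matern_pair_density_pos)
  have int: "integrable lborel ?f"
    using assms by (rule integrable_matern_pair_density)
  have "integral\<^sup>L lborel ?f \<noteq> 0"
  proof
    assume "integral\<^sup>L lborel ?f = 0"
    then have "AE k in lborel. ?f k = 0"
      using integral_nonneg_eq_0_iff_AE[OF int] pos by (simp add: less_imp_le)
    then have "AE k::real^'d in lborel. False"
      by (rule eventually_mono) (metis pos less_irrefl)
    then have "ae_filter (lborel :: (real^'d) measure) = bot"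
      by (simp add: eventually_False)
    then show False
      by (simp add: ae_filter_eq_bot_iff)
  qed
  moreover have "integral\<^sup>L lborel ?f \<ge> 0"
    using pos by (simp add: less_imp_le)
  ultimately show ?thesis
    by (simp add: matern_pair_cov_def)
qed

lemma matrix_inv_right:
  fixes A :: "'a::semiring_1^'n^'m"
  assumes "invertible A"
  shows "A ** matrix_inv A = mat 1"
  using assms unfolding invertible_def matrix_inv_def by (rule someI2_ex) blast

lemma matrix_left_inverse_unique:
  fixes A B X :: "'a::field^'n^'n"
  assumes "A ** X = mat 1" and "B ** X = mat 1"
  shows "A = B"
proof -
  have "X ** B = mat 1"
    using assms(2) by (simp add: matrix_left_right_inverse)
  then have "A = (A ** X) ** B"
    by (metis matrix_mul_assoc matrix_mul_rid)
  then show ?thesis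
    using assms(1) by (simp add: matrix_mul_lid)
qed

lemma gram_mult_inverse_gram:
  fixes D :: "real^'n^'n"
  assumes "invertible D"
  shows "(transpose D ** D) ** (matrix_inv D ** transpose (matrix_inv D)) = mat 1"
proof -
  have "transpose D ** transpose (matrix_inv D) = mat 1"
    using matrix_inv_right[OF assms]
    by (metis matrix_left_right_inverse matrix_transpose_mul transpose_mat)
  then have "transpose D ** (D ** matrix_inv D) ** transpose (matrix_inv D) = mat 1"
    using matrix_inv_right[OF assms] by (simp add: matrix_mul_rid)
  then show ?thesis
    by (simp add: matrix_mul_assoc)
qed

lemma inverse_gram_eq_iff:
  fixes D D' :: "real^'n^'n"
  assumes "invertible D" and "invertible D'"
  shows "matrix_inv D ** transpose (matrix_inv D) = matrix_inv D' ** transpose (matrix_inv D')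
    \<longleftrightarrow> transpose D ** D = transpose D' ** D'"
  using gram_mult_inverse_gram[OF assms(1)] gram_mult_inverse_gram[OF assms(2)]
  by (metis matrix_left_inverse_unique matrix_left_right_inverse)

lemma matern_spde_cov_eq_iff_gram_eq:
  fixes \<kappa> \<alpha> :: "'p::finite \<Rightarrow> real" and D D' :: "real^'p^'p"
  assumes "\<And>i. \<kappa> i > 0" and "\<And>i. \<alpha> i > real CARD('d::finite) / 2"
    and "invertible D" and "invertible D'"
  shows "(\<forall>h::real^'d. matern_spde_cov \<kappa> \<alpha> D h = matern_spde_cov \<kappa> \<alpha> D' h)
    \<longleftrightarrow> transpose D ** D = transpose D' ** D'"
proof -
  have "(\<forall>h::real^'d. matern_spde_cov \<kappa> \<alpha> D h = matern_spde_cov \<kappa> \<alpha> D' h)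
      \<longleftrightarrow> matrix_inv D ** transpose (matrix_inv D) = matrix_inv D' ** transpose (matrix_inv D')"
  proof
    assume cov_eq: "\<forall>h::real^'d. matern_spde_cov \<kappa> \<alpha> D h = matern_spde_cov \<kappa> \<alpha> D' h"
    show "matrix_inv D ** transpose (matrix_inv D) = matrix_inv D' ** transpose (matrix_inv D')"
    proof (intro iffD2[OF vec_eq_iff] allI)
      fix i j
      have "matern_spde_cov \<kappa> \<alpha> D (0::real^'d) $ i $ j
          = matern_spde_cov \<kappa> \<alpha> D' (0::real^'d) $ i $ j"
        using cov_eq by simp
      moreover have "matern_pair_cov \<kappa> \<alpha> i j (0::real^'d) > 0"
        using assms(1,2) by (intro matern_pair_cov_zero_pos)
      ultimately show "(matrix_inv D ** transpose (matrix_inv D)) $ i $ j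
          = (matrix_inv D' ** transpose (matrix_inv D')) $ i $ j"
        unfolding matern_spde_cov_def by simp
    qed
  qed (simp add: matern_spde_cov_def)
  with assms(3,4) show ?thesis
    by (simp add: inverse_gram_eq_iff)
qed

lemma gram_orthogonal_mult:
  fixes Q A :: "real^'n^'n"
  assumes "orthogonal_matrix Q"
  shows "transpose (Q ** A) ** (Q ** A) = transpose A ** A"
proof -
  have "transpose (Q ** A) ** (Q ** A) = transpose A ** (transpose Q ** Q) ** A"
    by (simp add: matrix_transpose_mul matrix_mul_assoc)
  then show ?thesis
    using assms by (simp add: orthogonal_matrix matrix_mul_rid)
qed

lemma gram_eq_iff_orthogonal_left_factor:
  fixes D D' :: "real^'n^'n"
  assumes "invertible D'"
  shows "transpose D ** D = transpose D' ** D' \<longleftrightarrow> (\<exists>Q. orthogonal_matrix Q \<and> D = Q ** D')"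
proof
  assume gram_eq: "transpose D ** D = transpose D' ** D'"
  define Q where "Q = D ** matrix_inv D'"
  have D'_inv: "matrix_inv D' ** D' = mat 1"
    using matrix_inv_right[OF assms] by (simp add: matrix_left_right_inverse)
  have "transpose Q ** Q = transpose (matrix_inv D') ** (transpose D ** D) ** matrix_inv D'"
    by (simp add: Q_def matrix_transpose_mul matrix_mul_assoc)
  also have "\<dots> = transpose (D' ** matrix_inv D') ** (D' ** matrix_inv D')"
    by (simp add: gram_eq matrix_transpose_mul matrix_mul_assoc)
  also have "\<dots> = mat 1"
    using matrix_inv_right[OF assms] by (simp add: matrix_mul_lid)
  finally have "orthogonal_matrix Q"
    by (simp add: orthogonal_matrix)
  moreover have "D = Q ** D'"
    by (metis Q_def D'_inv matrix_mul_assoc matrix_mul_rid)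
  ultimately show "\<exists>Q. orthogonal_matrix Q \<and> D = Q ** D'"
    by blast
qed (auto simp: gram_orthogonal_mult)

lemma invertible_if_gram_eq:
  fixes R D :: "real^'n^'n"
  assumes "transpose R ** R = transpose D ** D" and "invertible D"
  shows "invertible R"
proof -
  have "det R * det R = det D * det D"
    using arg_cong[OF assms(1), of det] by (simp add: det_mul)
  then show ?thesis
    using assms(2) unfolding invertible_det_nz by (metis mult_eq_0_iff)
qed

lemma finite_linorder_less_induct:
  fixes P :: "'a::{finite,linorder} \<Rightarrow> bool"
  assumes "\<And>i. (\<And>k. k < i \<Longrightarrow> P k) \<Longrightarrow> P i"
  shows "P i"
proof (induction i rule: measure_induct_rule[of "\<lambda>i. card {k. k < i}"])
  case (less i)
  show ?case
  proof (rule assms)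
    fix k assume "k < i"
    then have "{l. l < k} \<subset> {l. l < i}"
      by auto
    then show "P k"
      by (intro less psubset_card_mono) simp_all
  qed
qed

lemma gram_entry_upper_triangular:
  fixes U :: "real^('p::{finite,linorder})^('p::{finite,linorder})"
  assumes "upper_triangular U"
  shows "(transpose U ** U) $ i $ j = (\<Sum>k | k < i. U $ k $ i * U $ k $ j) + U $ i $ i * U $ i $ j"
proof -
  have "(transpose U ** U) $ i $ j = (\<Sum>k\<in>UNIV. U $ k $ i * U $ k $ j)"
    by (simp add: matrix_matrix_mult_def transpose_def)
  also have "\<dots> = (\<Sum>k\<in>insert i {k. k < i}. U $ k $ i * U $ k $ j)"
    using assms unfolding upper_triangular_def
    by (intro sum.mono_neutral_right) (auto simp: not_less)
  finally show ?thesis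
    by simp
qed

lemma upper_triangular_gram_inj:
  fixes U V :: "real^('p::{finite,linorder})^('p::{finite,linorder})"
  assumes "upper_triangular U" "\<And>i. U $ i $ i > 0"
    and "upper_triangular V" "\<And>i. V $ i $ i > 0"
    and gram_eq: "transpose U ** U = transpose V ** V"
  shows "U = V"
proof -
  have "U $ i = V $ i" for i
  proof (induction i rule: finite_linorder_less_induct)
    case (1 i)
    have "U $ i $ i * U $ i $ j = V $ i $ i * V $ i $ j" for j
      using gram_entry_upper_triangular[OF assms(1), of i j]
        gram_entry_upper_triangular[OF assms(3), of i j] gram_eq 1
      by simp
    moreover from this[of i] have "U $ i $ i = V $ i $ i"
      using assms(2,4)[of i] by (simp add: power2_eq_square[symmetric] power2_eq_iff_nonneg)
    ultimately show ?case
      using assms(2)[of i] by (simp add: vec_eq_iff)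
  qed
  then show ?thesis
    by (simp add: vec_eq_iff)
qed

lemma chol_eqI:
  assumes "upper_triangular U" "\<And>i. U $ i $ i > 0" "transpose U ** U = A"
  shows "chol A = U"
  unfolding chol_def
proof (rule the_equality)
  show "upper_triangular U \<and> (\<forall>i. U $ i $ i > 0) \<and> transpose U ** U = A"
    using assms by blast
qed (use assms upper_triangular_gram_inj in blast)

lemma column_notin_span_other_columns:
  fixes D :: "real^'n^'n"
  assumes "invertible D" and "j \<notin> S"
  shows "column j D \<notin> span ((\<lambda>i. column i D) ` S)"
proof
  assume "column j D \<in> span ((\<lambda>i. column i D) ` S)"
  also have "(\<lambda>i. column i D) ` S = (\<lambda>x. D *v x) ` (\<lambda>i. axis i 1) ` S"
    by (simp add: image_image matrix_vector_mult_basis)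
  also have "span \<dots> = (\<lambda>x. D *v x) ` span ((\<lambda>i. axis i 1) ` S)"
    by (simp add: span_linear_image)
  finally obtain x where x: "x \<in> span ((\<lambda>i. axis i 1) ` S)" "D *v axis j 1 = D *v x"
    by (auto simp: matrix_vector_mult_basis)
  then have "x = axis j 1"
    using inj_matrix_vector_mult[OF assms(1)] by (auto dest: injD)
  moreover have "x $ j = 0"
    using x(1) assms(2)
    by (induction rule: span_induct) (auto simp: subspace_def axis_def)
  ultimately show False
    by (simp add: axis_def)
qed

lemma gram_schmidt_columns:
  fixes D :: "real^('p::{finite,linorder})^('p::{finite,linorder})"
  assumes "invertible D"
  obtains e
  where "\<And>j. norm (e j) = 1" "\<And>i j. i \<noteq> j \<Longrightarrow> orthogonal (e i) (e j)"
    "\<And>i j. j < i \<Longrightarrow> e i \<bullet> column j D = 0" "\<And>j. e j \<bullet> column j D > 0"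
proof -
  define W where "W j = span ((\<lambda>i. column i D) ` {i. i < j})" for j
  have "\<forall>j. \<exists>y z. y \<in> W j \<and> (\<forall>w\<in>W j. orthogonal z w) \<and> column j D = y + z"
    unfolding W_def by (metis orthogonal_subspace_decomp_exists)
  then obtain y z where y: "\<And>j. y j \<in> W j"
    and z: "\<And>j w. w \<in> W j \<Longrightarrow> orthogonal (z j) w"
    and yz: "\<And>j. column j D = y j + z j"
    by metis
  have column_in_W: "column j D \<in> W i" if "j < i" for i j
    using that unfolding W_def by (intro span_base) auto
  have "z j \<noteq> 0" for j
    using column_notin_span_other_columns[OF assms, of j "{i. i < j}"] y[of j] yz[of j]
    by (auto simp: W_def)
  have z_in_W: "z j \<in> W i" if "j < i" for i j
  proof -
    have "W j \<subseteq> W i"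
      using that unfolding W_def by (intro span_mono) auto
    then have "y j \<in> W i"
      using y by blast
    then have "column j D - y j \<in> W i"
      using column_in_W[OF that] unfolding W_def by (intro span_diff)
    then show ?thesis
      using yz[of j] by simp
  qed
  have z_orth: "orthogonal (z i) (z j)" if "i \<noteq> j" for i j
    using z z_in_W that by (metis orthogonal_commute linorder_neq_iff)
  define e where "e j = (1 / norm (z j)) *\<^sub>R z j" for j
  show ?thesis
  proof
    show "norm (e j) = 1" for j
      using \<open>z j \<noteq> 0\<close> by (simp add: e_def)
    show "orthogonal (e i) (e j)" if "i \<noteq> j" for i j
      using z_orth[OF that] by (simp add: e_def orthogonal_def)
    show "e i \<bullet> column j D = 0" if "j < i" for i j
      using z[OF column_in_W[OF that]] by (simp add: e_def orthogonal_def)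
    show "e j \<bullet> column j D > 0" for j
    proof -
      have "z j \<bullet> y j = 0"
        using z[OF y] by (simp add: orthogonal_def)
      then have "e j \<bullet> column j D = norm (z j)"
        by (simp add: e_def yz inner_add_right dot_square_norm power2_eq_square)
      then show ?thesis
        using \<open>z j \<noteq> 0\<close> by simp
    qed
  qed
qed

lemma qr_decomposition:
  fixes D :: "real^('p::{finite,linorder})^('p::{finite,linorder})"
  assumes "invertible D"
  obtains Q R where "orthogonal_matrix Q" "D = Q ** R" "upper_triangular R" "\<And>i. R $ i $ i > 0"
proof -
  obtain e where e: "\<And>j. norm (e j) = 1" "\<And>i j. i \<noteq> j \<Longrightarrow> orthogonal (e i) (e j)"
    "\<And>i j. j < i \<Longrightarrow> e i \<bullet> column j D = 0" "\<And>j. e j \<bullet> column j D > 0"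
    using gram_schmidt_columns[OF assms] by blast
  define Q where "Q = (\<chi> i j. e j $ i)"
  have column_Q: "column j Q = e j" for j
    by (simp add: Q_def column_def vec_eq_iff)
  have Q: "orthogonal_matrix Q"
    unfolding orthogonal_matrix_orthonormal_columns column_Q using e(1,2) by blast
  define R where "R = transpose Q ** D"
  have R: "R $ i $ j = e i \<bullet> column j D" for i j
    by (simp add: R_def matrix_matrix_mult_def transpose_def inner_vec_def column_def Q_def)
  have "Q ** R = D"
    using Q by (simp add: R_def matrix_mul_assoc orthogonal_matrix_def matrix_mul_lid)
  moreover have "upper_triangular R"
    using e(3) by (simp add: upper_triangular_def R)
  ultimately show ?thesis
    using that Q e(4) R by metis
qed

theorem proposition2:
  fixes \<kappa> \<alpha> :: "'p::{finite,linorder} \<Rightarrow> real"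
    and D :: "real^('p::{finite,linorder})^('p::{finite,linorder})"
  assumes kappa_pos: "\<And>i. \<kappa> i > 0"
    and alpha_gt: "\<And>i. \<alpha> i > real CARD('d::finite) / 2"
    and D_inv: "invertible D"
  shows "(\<forall>Dh. invertible Dh \<longrightarrow>
            ((\<forall>h::real^('d::finite). matern_spde_cov \<kappa> \<alpha> D h = matern_spde_cov \<kappa> \<alpha> Dh h)
             \<longleftrightarrow> (\<exists>Q. orthogonal_matrix Q \<and> D = Q ** Dh)))
       \<and> (\<exists>Dh. invertible Dh \<and> (upper_triangular Dh \<or> lower_triangular Dh) \<and>
            (\<forall>h::real^('d::finite). matern_spde_cov \<kappa> \<alpha> D h = matern_spde_cov \<kappa> \<alpha> Dh h))
       \<and> (\<forall>Dh.
            (invertible Dh \<and> upper_triangular Dh \<and> (\<forall>i. Dh $ i $ i > 0) \<and>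
             (\<forall>h::real^('d::finite). matern_spde_cov \<kappa> \<alpha> D h = matern_spde_cov \<kappa> \<alpha> Dh h))
            \<longleftrightarrow> Dh = chol (transpose D ** D))"
proof -
  have cov_eq_iff: "(\<forall>h::real^'d. matern_spde_cov \<kappa> \<alpha> D h = matern_spde_cov \<kappa> \<alpha> Dh h)
      \<longleftrightarrow> transpose Dh ** Dh = transpose D ** D" if "invertible Dh" for Dh
    using matern_spde_cov_eq_iff_gram_eq[OF kappa_pos alpha_gt D_inv that] by auto
  obtain Q R where QR: "orthogonal_matrix Q" "D = Q ** R" "upper_triangular R" "\<And>i. R $ i $ i > 0"
    using qr_decomposition[OF D_inv] by blast
  have gram_R: "transpose R ** R = transpose D ** D"
    using QR(1,2) by (simp add: gram_orthogonal_mult)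
  have R_inv: "invertible R"
    using gram_R D_inv by (rule invertible_if_gram_eq)
  have chol_R: "chol (transpose D ** D) = R"
    using QR(3,4) gram_R by (rule chol_eqI)
  have "invertible Dh \<and> upper_triangular Dh \<and> (\<forall>i. Dh $ i $ i > 0) \<and>
      (\<forall>h::real^'d. matern_spde_cov \<kappa> \<alpha> D h = matern_spde_cov \<kappa> \<alpha> Dh h)
    \<longleftrightarrow> Dh = chol (transpose D ** D)" (is "?chol_like Dh \<longleftrightarrow> _") for Dh
  proof
    assume "?chol_like Dh"
    then show "Dh = chol (transpose D ** D)"
      using cov_eq_iff chol_eqI[of Dh] by metis
  qed (use chol_R R_inv QR(3,4) gram_R cov_eq_iff in blast)
  moreover have "\<forall>Dh. invertible Dh \<longrightarrow>
      ((\<forall>h::real^'d. matern_spde_cov \<kappa> \<alpha> D h = matern_spde_cov \<kappa> \<alpha> Dh h)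
       \<longleftrightarrow> (\<exists>Q. orthogonal_matrix Q \<and> D = Q ** Dh))"
    using cov_eq_iff gram_eq_iff_orthogonal_left_factor by (metis (no_types, lifting))
  ultimately show ?thesis
    using R_inv QR(3) cov_eq_iff[OF R_inv] gram_R by blast
qed

end
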